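(* For all $N\ge 2$ and all $s\ge 1$, $\alpha_{N,s}\le\beta_s$.
   Context: For $N\ge 2$ and $s\ge 1$, $$\alpha_{N,s} := \inf\left\{\frac{\sum_{1\le j<k\le N}\frac{|x_j|^s+|x_k|^s}{|x_j-x_k|}}{(N-1)\sum_{k=1}^N|x_k|^{s-1}} : x_1,\dots,x_N\in\mathbb{R}^3 \text{ pairwise distinct}\right\}$$ (convention $|x|^0=1$ when $s=1$). For a Borel probability measure $\mu$ on $\mathbb{R}^3$ let $I_s(\mu):=\iint_{\mathbb{R}^3\times\mathbb{R}^3}\frac{|x|^s+|y|^s}{2|x-y|}\,d\mu(x)\,d\mu(y)\in[0,\infty]$. Let $D_s(\mathbb{R}^3)$ be the set of Borel probability measures $\mu$ on $\mathbb{R}^3$ that belong to $H^{-1}(\mathbb{R}^3)$ (i.e. $\int_{\mathbb{R}^3}\frac{|\hat\mu(k)|^2}{1+|k|^2}dk<\infty$) and satisfy $\int|x|^{s-1}d\mu(x)<\infty$. Define $$\beta_s := \inf\left\{\frac{I_s(\mu)}{\int_{\mathbb{R}^3}|x|^{s-1}d\mu(x)} : \mu\in D_s(\mathbb{R}^3)\right\}.$$ *)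

theory Defs
  imports "HOL-Probability.Probability"
begin

definition pw :: "real \<Rightarrow> real \<Rightarrow> real" where
  "pw s r = (if s = 1 then 1 else r powr (s - 1))"

definition alpha :: "nat \<Rightarrow> real \<Rightarrow> ennreal" where
  "alpha N s = (INF x \<in> {x :: nat \<Rightarrow> real^3. inj_on x {..<N}}.
     ennreal ((\<Sum>k<N. \<Sum>j<k. (norm (x j) powr s + norm (x k) powr s) / norm (x j - x k))
              / ((real N - 1) * (\<Sum>k<N. pw s (norm (x k))))))"

text \<open>Fourier transform of a finite measure on R^3 (normalisation irrelevant for H^{-1}).\<close>
definition fourier3 :: "(real^3) measure \<Rightarrow> real^3 \<Rightarrow> complex" where
  "fourier3 M k = (CLINT x|M. cis (- (k \<bullet> x)))"

definition in_Hminus1 :: "(real^3) measure \<Rightarrow> bool" where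
  "in_Hminus1 M \<longleftrightarrow>
     (\<integral>\<^sup>+ k. ennreal ((cmod (fourier3 M k))\<^sup>2 / (1 + (norm k)\<^sup>2)) \<partial>lborel) < \<infinity>"

definition D_s :: "real \<Rightarrow> (real^3) measure set" where
  "D_s s = {M. sets M = sets borel \<and> prob_space M \<and> in_Hminus1 M \<and>
              (\<integral>\<^sup>+ x. ennreal (pw s (norm x)) \<partial>M) < \<infinity>}"

definition kern :: "real \<Rightarrow> real^3 \<Rightarrow> real^3 \<Rightarrow> ennreal" where
  "kern s x y = (if x = y then \<infinity>
                 else ennreal ((norm x powr s + norm y powr s) / (2 * norm (x - y))))"

definition I_s :: "real \<Rightarrow> (real^3) measure \<Rightarrow> ennreal" where
  "I_s s M = (\<integral>\<^sup>+ z. kern s (fst z) (snd z) \<partial>(M \<Otimes>\<^sub>M M))"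

definition beta :: "real \<Rightarrow> ennreal" where
  "beta s = (INF M \<in> D_s s. I_s s M / (\<integral>\<^sup>+ x. ennreal (pw s (norm x)) \<partial>M))"

end

theory Submission
  imports Defs
begin

text \<open>
  Averaging argument. Draw \<open>N\<close> points independently from an admissible \<open>\<mu>\<close>.
  For every configuration the definition of \<open>alpha\<close> bounds
  \<open>alpha N s * (N - 1) * (\<Sum>k. |x k|^(s-1))\<close> by \<open>\<Sum>j<k. 2 * kern s (x j) (x k)\<close>;
  coincident points make the right-hand side infinite, so the bound holds everywhere.
  Taking expectations, each of the \<open>N(N-1)/2\<close> pairs contributes \<open>2 * I_s s \<mu>\<close> and each
  point contributes \<open>\<integral>|x|^(s-1) d\<mu>\<close>; cancelling \<open>N(N-1)\<close> leaves
  \<open>alpha N s * \<integral>|x|^(s-1) d\<mu> \<le> I_s s \<mu>\<close>.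
\<close>

lemma distr_PiM_pair:
  assumes M: "\<And>i. i \<in> I \<Longrightarrow> prob_space (M i)" and I: "j \<in> I" "k \<in> I" "j \<noteq> k"
  shows "distr (Pi\<^sub>M I M) (M j \<Otimes>\<^sub>M M k) (\<lambda>\<omega>. (\<omega> j, \<omega> k)) = M j \<Otimes>\<^sub>M M k"
    (is "distr ?P _ ?t = _")
proof (rule pair_measure_eqI[symmetric])
  show "sigma_finite_measure (M j)" "sigma_finite_measure (M k)"
    using M I by (simp_all add: prob_space_imp_sigma_finite)
  show "sets (M j \<Otimes>\<^sub>M M k) = sets (distr ?P (M j \<Otimes>\<^sub>M M k) ?t)" by simp
  fix A B assume A: "A \<in> sets (M j)" and B: "B \<in> sets (M k)"
  let ?C = "\<lambda>i. if i = j then A else B"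
  have "?t -` (A \<times> B) \<inter> space ?P = prod_emb I M {j, k} (Pi\<^sub>E {j, k} ?C)"
    using I by (auto simp: prod_emb_def space_PiM PiE_iff)
  moreover have "?t \<in> measurable ?P (M j \<Otimes>\<^sub>M M k)"
    using I by measurable
  ultimately have "emeasure (distr ?P (M j \<Otimes>\<^sub>M M k) ?t) (A \<times> B)
      = emeasure ?P (prod_emb I M {j, k} (Pi\<^sub>E {j, k} ?C))"
    using A B by (simp add: emeasure_distr)
  also have "\<dots> = (\<Prod>i\<in>{j, k}. emeasure (M i) (?C i))"
    using M I A B by (intro emeasure_PiM_emb) auto
  finally show "emeasure (M j) A * emeasure (M k) B = emeasure (distr ?P (M j \<Otimes>\<^sub>M M k) ?t) (A \<times> B)"
    using I by simp
qed

lemma nn_integral_PiM_pair: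
  assumes "\<And>i. i \<in> I \<Longrightarrow> prob_space (M i)" "j \<in> I" "k \<in> I" "j \<noteq> k"
    and f: "f \<in> borel_measurable (M j \<Otimes>\<^sub>M M k)"
  shows "(\<integral>\<^sup>+ \<omega>. f (\<omega> j, \<omega> k) \<partial>Pi\<^sub>M I M) = (\<integral>\<^sup>+ z. f z \<partial>(M j \<Otimes>\<^sub>M M k))"
proof -
  have "(\<lambda>\<omega>. (\<omega> j, \<omega> k)) \<in> measurable (Pi\<^sub>M I M) (M j \<Otimes>\<^sub>M M k)"
    using assms(2,3) by measurable
  then have "(\<integral>\<^sup>+ \<omega>. f (\<omega> j, \<omega> k) \<partial>Pi\<^sub>M I M)
      = (\<integral>\<^sup>+ z. f z \<partial>distr (Pi\<^sub>M I M) (M j \<Otimes>\<^sub>M M k) (\<lambda>\<omega>. (\<omega> j, \<omega> k)))"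
    using f by (simp add: nn_integral_distr)
  also have "distr (Pi\<^sub>M I M) (M j \<Otimes>\<^sub>M M k) (\<lambda>\<omega>. (\<omega> j, \<omega> k)) = M j \<Otimes>\<^sub>M M k"
    by (rule distr_PiM_pair[OF assms(1-4)])
  finally show ?thesis .
qed

lemma nn_integral_PiM_component:
  assumes "\<And>i. i \<in> I \<Longrightarrow> prob_space (M i)" "k \<in> I"
    and f: "f \<in> borel_measurable (M k)"
  shows "(\<integral>\<^sup>+ \<omega>. f (\<omega> k) \<partial>Pi\<^sub>M I M) = (\<integral>\<^sup>+ z. f z \<partial>M k)"
proof -
  have "(\<lambda>\<omega>. \<omega> k) \<in> measurable (Pi\<^sub>M I M) (M k)"
    using assms(2) by measurable
  then have "(\<integral>\<^sup>+ \<omega>. f (\<omega> k) \<partial>Pi\<^sub>M I M) = (\<integral>\<^sup>+ z. f z \<partial>distr (Pi\<^sub>M I M) (M k) (\<lambda>\<omega>. \<omega> k))"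
    using f by (simp add: nn_integral_distr)
  also have "distr (Pi\<^sub>M I M) (M k) (\<lambda>\<omega>. \<omega> k) = M k"
    by (rule distr_PiM_component[OF assms(1,2)])
  finally show ?thesis .
qed

lemma nn_integral_PiM_sum_components:
  assumes "prob_space M" "finite I" and f: "f \<in> borel_measurable M"
  shows "(\<integral>\<^sup>+ \<omega>. (\<Sum>k\<in>I. f (\<omega> k)) \<partial>Pi\<^sub>M I (\<lambda>_. M)) = of_nat (card I) * (\<integral>\<^sup>+ z. f z \<partial>M)"
proof -
  have "(\<integral>\<^sup>+ \<omega>. (\<Sum>k\<in>I. f (\<omega> k)) \<partial>Pi\<^sub>M I (\<lambda>_. M)) = (\<Sum>k\<in>I. \<integral>\<^sup>+ \<omega>. f (\<omega> k) \<partial>Pi\<^sub>M I (\<lambda>_. M))"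
    using f by (intro nn_integral_sum) (auto intro: measurable_compose[OF measurable_component_singleton])
  also have "\<dots> = (\<Sum>k\<in>I. \<integral>\<^sup>+ z. f z \<partial>M)"
    using assms by (intro sum.cong refl nn_integral_PiM_component) auto
  finally show ?thesis by simp
qed

lemma nn_integral_PiM_sum_pairs:
  assumes "prob_space M" and f: "f \<in> borel_measurable (M \<Otimes>\<^sub>M M)"
  shows "(\<integral>\<^sup>+ \<omega>. (\<Sum>k<N. \<Sum>j<k. f (\<omega> j, \<omega> k)) \<partial>Pi\<^sub>M {..<N} (\<lambda>_. M))
       = of_nat (\<Sum>k<N. k) * (\<integral>\<^sup>+ z. f z \<partial>(M \<Otimes>\<^sub>M M))"
proof -
  let ?P = "Pi\<^sub>M {..<N} (\<lambda>_. M)"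
  have meas: "(\<lambda>\<omega>. f (\<omega> j, \<omega> k)) \<in> borel_measurable ?P" if "j < N" "k < N" for j k
    using that by (intro measurable_compose[OF _ f]) measurable
  have "(\<integral>\<^sup>+ \<omega>. (\<Sum>k<N. \<Sum>j<k. f (\<omega> j, \<omega> k)) \<partial>?P)
      = (\<Sum>k<N. \<integral>\<^sup>+ \<omega>. (\<Sum>j<k. f (\<omega> j, \<omega> k)) \<partial>?P)"
    using meas by (intro nn_integral_sum borel_measurable_sum) auto
  also have "\<dots> = (\<Sum>k<N. \<Sum>j<k. \<integral>\<^sup>+ \<omega>. f (\<omega> j, \<omega> k) \<partial>?P)"
    using meas by (intro sum.cong refl nn_integral_sum) auto
  also have "\<dots> = (\<Sum>k<N. \<Sum>j<k. \<integral>\<^sup>+ z. f z \<partial>(M \<Otimes>\<^sub>M M))"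
    using assms by (intro sum.cong refl nn_integral_PiM_pair) auto
  finally show ?thesis by (simp add: sum_distrib_right)
qed

lemma kern_measurable:
  assumes "sets M = sets borel"
  shows "(\<lambda>z. kern s (fst z) (snd z)) \<in> borel_measurable (M \<Otimes>\<^sub>M M)"
proof -
  have "(\<lambda>z. kern s (fst z) (snd z)) \<in> borel_measurable (borel \<Otimes>\<^sub>M borel :: ((real^3) \<times> (real^3)) measure)"
    unfolding kern_def by measurable
  then show ?thesis
    by (simp add: measurable_cong_sets[OF sets_pair_measure_cong[OF assms assms] refl])
qed

lemma kern_neq_zero: "kern s x y \<noteq> 0"
proof (cases "x = y")
  case False
  then have "x \<noteq> 0 \<or> y \<noteq> 0" by auto
  then have "norm x powr s + norm y powr s > 0"
    by (auto intro: add_pos_nonneg add_nonneg_pos)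
  with False show ?thesis by (simp add: kern_def)
qed (simp add: kern_def)

lemma double_kern_eq:
  assumes "x \<noteq> y"
  shows "2 * kern s x y = ennreal ((norm x powr s + norm y powr s) / norm (x - y))"
proof -
  define t where "t = (norm x powr s + norm y powr s) / (2 * norm (x - y))"
  have "2 * kern s x y = ennreal 2 * ennreal t"
    using assms by (simp add: kern_def t_def)
  also have "\<dots> = ennreal (2 * t)"
    by (rule ennreal_mult[symmetric]) (simp_all add: t_def)
  also have "2 * t = (norm x powr s + norm y powr s) / norm (x - y)"
    using assms by (simp add: t_def field_simps)
  finally show ?thesis .
qed

lemma pw_nonneg: "0 \<le> pw s r"
  by (simp add: pw_def)

lemma sum_pw_pos:
  fixes x :: "nat \<Rightarrow> real^3"
  assumes "inj_on x {..<N}" "N \<ge> 2"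
  shows "0 < (\<Sum>k<N. pw s (norm (x k)))"
proof -
  have "x 0 \<noteq> x 1"
    using assms by (intro inj_on_contraD[OF assms(1)]) auto
  then obtain i where "i \<in> {0, 1}" "x i \<noteq> 0"
    by (metis insertCI)
  with assms(2) have i: "i < N" "x i \<noteq> 0"
    by auto
  then have "0 < pw s (norm (x i))"
    by (simp add: pw_def)
  with i show ?thesis
    by (intro sum_pos2[of _ i]) (auto intro: pw_nonneg)
qed

lemma pair_sum_kern_eq_ennreal:
  fixes x :: "nat \<Rightarrow> real^3"
  assumes "inj_on x {..<N}"
  shows "(\<Sum>k<N. \<Sum>j<k. 2 * kern s (x j) (x k))
       = ennreal (\<Sum>k<N. \<Sum>j<k. (norm (x j) powr s + norm (x k) powr s) / norm (x j - x k))"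
proof -
  have "x j \<noteq> x k" if "j < k" "k < N" for j k
    by (rule inj_on_contraD[OF assms]) (use that in auto)
  then have "(\<Sum>k<N. \<Sum>j<k. 2 * kern s (x j) (x k))
      = (\<Sum>k<N. \<Sum>j<k. ennreal ((norm (x j) powr s + norm (x k) powr s) / norm (x j - x k)))"
    by (intro sum.cong refl) (simp add: double_kern_eq)
  also have "\<dots> = ennreal (\<Sum>k<N. \<Sum>j<k. (norm (x j) powr s + norm (x k) powr s) / norm (x j - x k))"
    by (simp add: sum_ennreal sum_nonneg)
  finally show ?thesis .
qed

lemma pair_sum_kern_eq_top:
  fixes x :: "nat \<Rightarrow> real^3"
  assumes "\<not> inj_on x {..<N}"
  shows "(\<Sum>k<N. \<Sum>j<k. 2 * kern s (x j) (x k)) = \<top>"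
proof -
  obtain a b where "a < N" "b < N" "a \<noteq> b" "x a = x b"
    using assms by (auto simp: inj_on_def)
  then obtain j k where jk: "j < k" "k < N" "x j = x k"
    by (cases a b rule: linorder_cases) auto
  then have "(\<Sum>j<k. 2 * kern s (x j) (x k)) = \<top>"
    by (auto simp: kern_def)
  with jk show ?thesis
    by auto
qed

lemma alpha_mult_le_pair_sum_kern:
  fixes x :: "nat \<Rightarrow> real^3"
  assumes N: "N \<ge> 2"
  shows "alpha N s * (ennreal (real N - 1) * (\<Sum>k<N. ennreal (pw s (norm (x k)))))
       \<le> (\<Sum>k<N. \<Sum>j<k. 2 * kern s (x j) (x k))"
proof (cases "inj_on x {..<N}")
  case True
  define num where "num = (\<Sum>k<N. \<Sum>j<k. (norm (x j) powr s + norm (x k) powr s) / norm (x j - x k))"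
  define den where "den = (real N - 1) * (\<Sum>k<N. pw s (norm (x k)))"
  have "den > 0"
    using N sum_pw_pos[OF True N] by (simp add: den_def)
  have "num \<ge> 0"
    by (simp add: num_def sum_nonneg)
  have "ennreal (real N - 1) * (\<Sum>k<N. ennreal (pw s (norm (x k)))) = ennreal den"
    using N by (simp add: den_def sum_ennreal pw_nonneg ennreal_mult sum_nonneg)
  moreover have "alpha N s \<le> ennreal (num / den)"
    unfolding alpha_def num_def den_def using True by (intro INF_lower) auto
  then have "alpha N s * ennreal den \<le> ennreal (num / den) * ennreal den"
    by (rule mult_right_mono) simp
  moreover have "ennreal (num / den) * ennreal den = ennreal num"
    using \<open>den > 0\<close> \<open>num \<ge> 0\<close> by (simp add: ennreal_mult[symmetric])
  ultimately show ?thesis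
    using pair_sum_kern_eq_ennreal[OF True] by (simp add: num_def)
next
  case False
  then show ?thesis
    by (simp add: pair_sum_kern_eq_top)
qed

lemma I_s_neq_zero:
  assumes "prob_space M" "sets M = sets borel"
  shows "I_s s M \<noteq> 0"
proof
  assume "I_s s M = 0"
  then have "AE z in M \<Otimes>\<^sub>M M. kern s (fst z) (snd z) = 0"
    unfolding I_s_def by (simp add: nn_integral_0_iff_AE kern_measurable[OF assms(2)])
  then have "AE z in M \<Otimes>\<^sub>M M. False"
    by (simp add: kern_neq_zero)
  then show False
    using prob_space.AE_False[OF prob_space_pair[OF assms(1) assms(1)]] by simp
qed

lemma alpha_mult_nn_integral_pw_le_I_s:
  assumes N: "N \<ge> 2" and M: "prob_space M" "sets M = sets borel"
  shows "alpha N s * (\<integral>\<^sup>+ x. ennreal (pw s (norm x)) \<partial>M) \<le> I_s s M"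
proof -
  let ?Q = "Pi\<^sub>M {..<N} (\<lambda>_. M)"
  let ?P = "\<integral>\<^sup>+ x. ennreal (pw s (norm x)) \<partial>M"
  let ?c = "of_nat (N * (N - 1)) :: ennreal"
  have pw_meas: "(\<lambda>x. ennreal (pw s (norm x))) \<in> borel_measurable M"
    using M(2) unfolding pw_def by measurable
  have kern2_meas: "(\<lambda>z. 2 * kern s (fst z) (snd z)) \<in> borel_measurable (M \<Otimes>\<^sub>M M)"
    using kern_measurable[OF M(2)] by measurable
  have gauss: "2 * (\<Sum>k<N. k) = N * (N - 1)"
    by (induct N) (auto simp: algebra_simps)
  have "?c * (alpha N s * ?P) = alpha N s * (ennreal (real N - 1) * (of_nat N * ?P))"
    using N by (simp add: ennreal_of_nat_eq_real_of_nat of_nat_diff ennreal_mult' mult_ac)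
  also have "\<dots> = (\<integral>\<^sup>+ \<omega>. alpha N s * (ennreal (real N - 1) * (\<Sum>k<N. ennreal (pw s (norm (\<omega> k))))) \<partial>?Q)"
    using pw_meas nn_integral_PiM_sum_components[OF M(1) _ pw_meas, of "{..<N}"]
    by (simp add: nn_integral_cmult borel_measurable_sum)
  also have "\<dots> \<le> (\<integral>\<^sup>+ \<omega>. (\<Sum>k<N. \<Sum>j<k. 2 * kern s (\<omega> j) (\<omega> k)) \<partial>?Q)"
    by (intro nn_integral_mono alpha_mult_le_pair_sum_kern N)
  also have "\<dots> = of_nat (\<Sum>k<N. k) * (2 * I_s s M)"
    using nn_integral_PiM_sum_pairs[OF M(1) kern2_meas, of N] kern_measurable[OF M(2)]
    by (simp add: I_s_def nn_integral_cmult)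
  also have "\<dots> = of_nat (2 * (\<Sum>k<N. k)) * I_s s M"
    by (simp only: of_nat_mult of_nat_numeral mult_ac)
  also have "\<dots> = ?c * I_s s M"
    by (simp only: gauss)
  finally have "?c * (alpha N s * ?P) \<le> ?c * I_s s M" .
  moreover have "?c \<noteq> 0"
    using N by simp
  ultimately show ?thesis
    by (metis ennreal_mult_le_mult_iff ennreal_of_nat_neq_top)
qed

lemma alpha_le_I_s_ratio:
  assumes N: "N \<ge> 2" and M: "M \<in> D_s s"
  shows "alpha N s \<le> I_s s M / (\<integral>\<^sup>+ x. ennreal (pw s (norm x)) \<partial>M)"
proof -
  let ?P = "\<integral>\<^sup>+ x. ennreal (pw s (norm x)) \<partial>M"
  have M': "prob_space M" "sets M = sets borel" and "?P < \<infinity>"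
    using M by (auto simp: D_s_def)
  show ?thesis
  proof (cases "?P = 0")
    case True
    \<comment> \<open>In \<open>ennreal\<close>, \<open>a / 0 = \<top>\<close> for \<open>a \<noteq> 0\<close>.\<close>
    then show ?thesis
      using I_s_neq_zero[OF M'] by (simp add: divide_ennreal_def ennreal_mult_top)
  next
    case False
    have "alpha N s = alpha N s * ?P / ?P"
      using False \<open>?P < \<infinity>\<close> by (simp add: ennreal_mult_divide_eq)
    also have "\<dots> \<le> I_s s M / ?P"
      by (intro divide_right_mono_ennreal alpha_mult_nn_integral_pw_le_I_s N M')
    finally show ?thesis .
  qed
qed

theorem lemma3p2:
  fixes N :: nat and s :: real
  assumes "N \<ge> 2" and "s \<ge> 1"
  shows "alpha N s \<le> beta s"
  unfolding beta_def using alpha_le_I_s_ratio[OF assms(1)] by (intro INF_greatest) auto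

end
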